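(* Let $\Gamma$ be a temporal theory, let $M=((W,\preccurlyeq,S),V)$ be a total THT model, and let $T=\{\circ^ip\mid p\in V((i,0)),\ i\ge 0\}\subseteq\mathbb{P}^{\circ}$ (so that $V((i,0))=V((i,1))=\{p\mid \circ^ip\in T\}$ for all $i\ge0$). Then $M$ is a temporal equilibrium model of $\Gamma$ if and only if $T$ is a $\mathrm{THT}$-temporal safe belief set of $\Gamma$.
   Context: Fix a countable set $\mathbb{P}$ of atoms. Temporal formulas: $\varphi ::= p\mid\bot\mid\varphi\wedge\varphi\mid\varphi\vee\varphi\mid\varphi\to\varphi\mid\circ\varphi\mid\varphi\,\mathsf{U}\,\varphi\mid\varphi\,\mathsf{R}\,\varphi$; $\neg\varphi:=\varphi\to\bot$, $\circ^0\varphi:=\varphi$, $\circ^{i+1}\varphi:=\circ\circ^i\varphi$. The THT frame is $W=\mathbb{N}\times\{0,1\}$, $(i,h)\preccurlyeq(j,t)$ iff $i=j$ and $h\le t$, $S((i,k))=(i+1,k)$. A THT model is $((W,\preccurlyeq,S),V)$ with $V:W\to2^{\mathbb{P}}$ and $V((i,0))\subseteq V((i,1))$. Satisfaction: $M,w\models p$ iff $p\in V(w)$; $\bot$ never; $\wedge,\vee$ pointwise; $M,w\models\varphi\to\psi$ iff for all $v\succcurlyeq w$, $M,v\models\varphi$ implies $M,v\models\psi$; $M,w\models\circ\varphi$ iff $M,S(w)\models\varphi$; $\varphi\,\mathsf{U}\,\psi$: some $k\ge0$ with $M,S^k(w)\models\psi$ and $M,S^i(w)\models\varphi$ for all $0\le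 i<k$; $\varphi\,\mathsf{R}\,\psi$: for all $k\ge0$, $M,S^k(w)\models\psi$ or $M,S^i(w)\models\varphi$ for some $0\le i<k$. $M$ is total if $V((i,0))=V((i,1))$ for all $i$. For THT models $M'=(\cdot,V')$, $M=(\cdot,V)$: $M'\le M$ iff $V'((i,1))=V((i,1))$ and $V'((i,0))\subseteq V((i,0))$ for all $i$; $M'<M$ iff $M'\le M$ and $V'\neq V$. A temporal equilibrium model of a theory $\Gamma$ is a total THT model $M$ with $M,(0,0)\models\Gamma$ such that no THT model $M'<M$ has $M',(0,0)\models\Gamma$. $\Gamma$ is THT-consistent if some THT model satisfies all of $\Gamma$ at some world; $\Gamma\models_{\mathrm{THT}}\Delta$ means every THT model and world satisfying all of $\Gamma$ satisfies all of $\Delta$. $\mathbb{P}^{\circ}:=\{\circ^ip\mid p\in\mathbb{P},i\ge0\}$. $T\subseteq\mathbb{P}^{\circ}$ is a THT-temporal safe belief set of $\Gamma$ if $\Sigma_T:=\Gamma\cup\{\circ^i\neg\neg p\mid \circ^ip\in T\}\cup\{\circ^i\neg p\mid\circ^ip\notin T\}$ is THT-consistent and $\Sigma_T\models_{\mathrm{THT}}T$. *)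

theory Defs
  imports Main "HOL-Library.Countable"
begin

datatype 'a tformula =
    Atom 'a
  | Bot
  | And "'a tformula" "'a tformula"
  | Or "'a tformula" "'a tformula"
  | Impl "'a tformula" "'a tformula"
  | Next "'a tformula"
  | Until "'a tformula" "'a tformula"
  | Release "'a tformula" "'a tformula"

definition Neg :: "'a tformula \<Rightarrow> 'a tformula" where
  "Neg \<phi> = Impl \<phi> Bot"

definition nexts :: "nat \<Rightarrow> 'a tformula \<Rightarrow> 'a tformula" where
  "nexts i \<phi> = (Next ^^ i) \<phi>"

(* Worlds (i,h) of W = N x {0,1}; h = False encodes 0 ("here"), h = True encodes 1 ("there").
   A valuation is V :: nat \<Rightarrow> bool \<Rightarrow> 'a set, V i h = V((i,h)). The frame is fixed,
   so a THT model is identified with its valuation. *)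
type_synonym 'a valuation = "nat \<Rightarrow> bool \<Rightarrow> 'a set"

definition tht_model :: "'a valuation \<Rightarrow> bool" where
  "tht_model V \<longleftrightarrow> (\<forall>i. V i False \<subseteq> V i True)"

(* (i,h) \<preccurlyeq> (j,t) iff i = j and h \<le> t *)
fun sat :: "'a valuation \<Rightarrow> nat \<Rightarrow> bool \<Rightarrow> 'a tformula \<Rightarrow> bool" where
  "sat V i h (Atom p) = (p \<in> V i h)"
| "sat V i h Bot = False"
| "sat V i h (And \<phi> \<psi>) = (sat V i h \<phi> \<and> sat V i h \<psi>)"
| "sat V i h (Or \<phi> \<psi>) = (sat V i h \<phi> \<or> sat V i h \<psi>)"
| "sat V i h (Impl \<phi> \<psi>) = (\<forall>t. h \<le> t \<longrightarrow> (sat V i t \<phi> \<longrightarrow> sat V i t \<psi>))"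
| "sat V i h (Next \<phi>) = sat V (Suc i) h \<phi>"
| "sat V i h (Until \<phi> \<psi>) =
     (\<exists>k. sat V (i + k) h \<psi> \<and> (\<forall>j<k. sat V (i + j) h \<phi>))"
| "sat V i h (Release \<phi> \<psi>) =
     (\<forall>k. sat V (i + k) h \<psi> \<or> (\<exists>j<k. sat V (i + j) h \<phi>))"

definition sat_set :: "'a valuation \<Rightarrow> nat \<Rightarrow> bool \<Rightarrow> 'a tformula set \<Rightarrow> bool" where
  "sat_set V i h \<Gamma> \<longleftrightarrow> (\<forall>\<phi>\<in>\<Gamma>. sat V i h \<phi>)"

definition total :: "'a valuation \<Rightarrow> bool" where
  "total V \<longleftrightarrow> (\<forall>i. V i False = V i True)"

definition le_model :: "'a valuation \<Rightarrow> 'a valuation \<Rightarrow> bool" where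
  "le_model V' V \<longleftrightarrow> (\<forall>i. V' i True = V i True \<and> V' i False \<subseteq> V i False)"

definition lt_model :: "'a valuation \<Rightarrow> 'a valuation \<Rightarrow> bool" where
  "lt_model V' V \<longleftrightarrow> le_model V' V \<and> V' \<noteq> V"

definition temporal_equilibrium_model :: "'a tformula set \<Rightarrow> 'a valuation \<Rightarrow> bool" where
  "temporal_equilibrium_model \<Gamma> V \<longleftrightarrow>
     tht_model V \<and> total V \<and> sat_set V 0 False \<Gamma> \<and>
     \<not> (\<exists>V'. tht_model V' \<and> lt_model V' V \<and> sat_set V' 0 False \<Gamma>)"

definition tht_consistent :: "'a tformula set \<Rightarrow> bool" where
  "tht_consistent \<Gamma> \<longleftrightarrow> (\<exists>V i h. tht_model V \<and> sat_set V i h \<Gamma>)"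

definition tht_entails :: "'a tformula set \<Rightarrow> 'a tformula set \<Rightarrow> bool" where
  "tht_entails \<Gamma> \<Delta> \<longleftrightarrow>
     (\<forall>V i h. tht_model V \<longrightarrow> sat_set V i h \<Gamma> \<longrightarrow> sat_set V i h \<Delta>)"

definition Pcirc :: "'a tformula set" where
  "Pcirc = {nexts i (Atom p) | i p. True}"

definition Sigma_T :: "'a tformula set \<Rightarrow> 'a tformula set \<Rightarrow> 'a tformula set" where
  "Sigma_T \<Gamma> T = \<Gamma>
     \<union> {nexts i (Neg (Neg (Atom p))) | i p. nexts i (Atom p) \<in> T}
     \<union> {nexts i (Neg (Atom p)) | i p. nexts i (Atom p) \<notin> T}"

definition tht_temporal_safe_belief_set :: "'a tformula set \<Rightarrow> 'a tformula set \<Rightarrow> bool" where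
  "tht_temporal_safe_belief_set \<Gamma> T \<longleftrightarrow>
     T \<subseteq> Pcirc \<and> tht_consistent (Sigma_T \<Gamma> T) \<and> tht_entails (Sigma_T \<Gamma> T) T"

end

(* Every formula of \<Sigma>_T is evaluated at some start point; shifting the model moves it to 0.
   The literals of \<Sigma>_T fix the "there" component of a model to V(_,1), so (V being total)
   the models of \<Sigma>_T are exactly the THT models below V that satisfy \<Gamma>.  Truth at "there"
   worlds depends on the "there" component alone, so with persistence \<Sigma>_T is consistent iff
   V satisfies \<Gamma>; and \<Sigma>_T entails T iff every such model evaluated at a "here" world is V
   itself, which is the minimality of V. *)
theory Submission
  imports Defs
begin

lemma all_bool_ge_iff: "(\<forall>t::bool. h \<le> t \<longrightarrow> P t) \<longleftrightarrow> P h \<and> P True"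
  by (cases h) (auto simp: all_bool_eq)

lemma sat_Impl_iff: "sat V i h (Impl \<phi> \<psi>) \<longleftrightarrow>
    (sat V i h \<phi> \<longrightarrow> sat V i h \<psi>) \<and> (sat V i True \<phi> \<longrightarrow> sat V i True \<psi>)"
  by (simp only: sat.simps all_bool_ge_iff)

declare sat.simps(5) [simp del] sat_Impl_iff [simp]

lemma sat_nexts: "sat V i h (nexts k \<phi>) = sat V (i + k) h \<phi>"
  by (induction k arbitrary: i) (simp_all add: nexts_def)

lemma nexts_Atom_eq_iff: "nexts i (Atom p) = nexts j (Atom q) \<longleftrightarrow> i = j \<and> p = q"
proof (induction i arbitrary: j)
  case 0
  then show ?case by (cases j) (auto simp: nexts_def)
next
  case (Suc i)
  then show ?case by (cases j) (auto simp: nexts_def)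
qed

lemma sat_Neg_Neg_Atom: "sat V i h (Neg (Neg (Atom p))) \<longleftrightarrow> p \<in> V i True"
  by (auto simp: Neg_def)

lemma sat_Neg_Atom:
  assumes "tht_model V"
  shows "sat V i h (Neg (Atom p)) \<longleftrightarrow> p \<notin> V i True"
  using assms by (cases h) (auto simp: Neg_def tht_model_def)

lemma sat_persistent:
  assumes "tht_model V" and "sat V i False \<phi>"
  shows "sat V i True \<phi>"
  using assms(2)
proof (induction \<phi> arbitrary: i)
  case (Atom p)
  then show ?case using assms(1) by (auto simp: tht_model_def)
next
  case (Release \<phi> \<psi>)
  then show ?case by (meson sat.simps(8))
qed (auto simp:)

lemma sat_total:
  assumes "total V"
  shows "sat V i h \<phi> = sat V i True \<phi>"
proof (induction \<phi> arbitrary: i)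
  case (Atom p)
  then show ?case using assms by (cases h) (auto simp: total_def)
qed (auto simp:)

lemma sat_True_cong:
  assumes "\<And>k. V k True = W k True"
  shows "sat V i True \<phi> = sat W i True \<phi>"
  by (induction \<phi> arbitrary: i) (auto simp: assms)

definition suffix_valuation :: "nat \<Rightarrow> 'a valuation \<Rightarrow> 'a valuation" where
  "suffix_valuation i V = (\<lambda>k. V (i + k))"

lemma sat_suffix_valuation: "sat (suffix_valuation i V) k h \<phi> = sat V (i + k) h \<phi>"
  by (induction \<phi> arbitrary: k h) (auto simp: suffix_valuation_def add.assoc)

lemma sat_set_suffix_valuation: "sat_set (suffix_valuation i V) 0 h \<Gamma> = sat_set V i h \<Gamma>"
  by (simp add: sat_set_def sat_suffix_valuation)

lemma tht_model_suffix_valuation: "tht_model V \<Longrightarrow> tht_model (suffix_valuation i V)"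
  by (simp add: tht_model_def suffix_valuation_def)

lemma tht_consistent_iff_initial:
  "tht_consistent \<Gamma> \<longleftrightarrow> (\<exists>V h. tht_model V \<and> sat_set V 0 h \<Gamma>)"
  unfolding tht_consistent_def
  by (metis sat_set_suffix_valuation tht_model_suffix_valuation)

lemma tht_entails_iff_initial:
  "tht_entails \<Gamma> \<Delta> \<longleftrightarrow> (\<forall>V h. tht_model V \<longrightarrow> sat_set V 0 h \<Gamma> \<longrightarrow> sat_set V 0 h \<Delta>)"
  unfolding tht_entails_def
  by (metis sat_set_suffix_valuation tht_model_suffix_valuation)

lemma sat_set_Sigma_T:
  assumes "tht_model W"
  shows "sat_set W i h (Sigma_T \<Gamma> T) \<longleftrightarrow>
    sat_set W i h \<Gamma> \<and> (\<forall>j p. p \<in> W (i + j) True \<longleftrightarrow> nexts j (Atom p) \<in> T)"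
proof -
  have "sat_set W i h (Sigma_T \<Gamma> T) \<longleftrightarrow> sat_set W i h \<Gamma> \<and>
      (\<forall>j p. nexts j (Atom p) \<in> T \<longrightarrow> sat W i h (nexts j (Neg (Neg (Atom p))))) \<and>
      (\<forall>j p. nexts j (Atom p) \<notin> T \<longrightarrow> sat W i h (nexts j (Neg (Atom p))))"
    unfolding sat_set_def Sigma_T_def by blast
  then show ?thesis
    using assms by (auto simp: sat_nexts sat_Neg_Neg_Atom sat_Neg_Atom)
qed

definition Pcirc_of :: "'a valuation \<Rightarrow> 'a tformula set" where
  "Pcirc_of V = {nexts i (Atom p) | i p. p \<in> V i False}"

lemma Pcirc_of_subset_Pcirc: "Pcirc_of V \<subseteq> Pcirc"
  by (auto simp: Pcirc_of_def Pcirc_def)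

lemma nexts_Atom_in_Pcirc_of: "nexts j (Atom p) \<in> Pcirc_of V \<longleftrightarrow> p \<in> V j False"
  by (auto simp: Pcirc_of_def nexts_Atom_eq_iff)

lemma sat_set_Pcirc_of: "sat_set W i h (Pcirc_of V) \<longleftrightarrow> (\<forall>j. V j False \<subseteq> W (i + j) h)"
  unfolding sat_set_def Pcirc_of_def by (force simp: sat_nexts)

lemma le_model_total_iff:
  assumes "total V"
  shows "le_model W V \<longleftrightarrow> tht_model W \<and> (\<forall>j. W j True = V j True)"
  using assms unfolding tht_model_def total_def le_model_def by blast

lemma models_Sigma_T_Pcirc_of:
  assumes "total V"
  shows "tht_model W \<and> sat_set W 0 h (Sigma_T \<Gamma> (Pcirc_of V)) \<longleftrightarrow>
    le_model W V \<and> sat_set W 0 h \<Gamma>"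
proof -
  have "(\<forall>j p. p \<in> W j True \<longleftrightarrow> nexts j (Atom p) \<in> Pcirc_of V) \<longleftrightarrow> (\<forall>j. W j True = V j True)"
    using assms by (auto simp: nexts_Atom_in_Pcirc_of total_def)
  then show ?thesis
    using assms by (auto simp: sat_set_Sigma_T le_model_total_iff)
qed

lemma sat_set_Pcirc_of_below:
  assumes "total V" and "le_model W V"
  shows "sat_set W 0 h (Pcirc_of V) \<longleftrightarrow> h \<or> W = V"
proof (cases h)
  case True
  then show ?thesis using assms by (simp add: sat_set_Pcirc_of le_model_def total_def)
next
  case False
  have "W = V \<longleftrightarrow> (\<forall>j. W j False = V j False)"
    using assms(2) by (auto simp: fun_eq_iff le_model_def all_bool_eq)
  then show ?thesis
    using False assms(2) by (auto simp: sat_set_Pcirc_of le_model_def)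
qed

lemma tht_consistent_Sigma_T_Pcirc_of:
  assumes "tht_model V" and "total V"
  shows "tht_consistent (Sigma_T \<Gamma> (Pcirc_of V)) \<longleftrightarrow> sat_set V 0 False \<Gamma>"
proof
  assume "tht_consistent (Sigma_T \<Gamma> (Pcirc_of V))"
  then obtain W h where W: "le_model W V" "sat_set W 0 h \<Gamma>"
    by (auto simp: tht_consistent_iff_initial models_Sigma_T_Pcirc_of[OF assms(2)])
  have "sat_set W 0 True \<Gamma>"
    using W sat_persistent le_model_total_iff[OF assms(2)]
    by (cases h) (auto simp: sat_set_def)
  moreover have "\<And>k. W k True = V k True"
    using W(1) by (simp add: le_model_def)
  ultimately show "sat_set V 0 False \<Gamma>"
    using sat_True_cong sat_total[OF assms(2)] by (metis sat_set_def)
next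
  assume "sat_set V 0 False \<Gamma>"
  then show "tht_consistent (Sigma_T \<Gamma> (Pcirc_of V))"
    using assms models_Sigma_T_Pcirc_of[OF assms(2)]
    by (auto simp: tht_consistent_iff_initial le_model_def)
qed

lemma tht_entails_Sigma_T_Pcirc_of:
  assumes "total V"
  shows "tht_entails (Sigma_T \<Gamma> (Pcirc_of V)) (Pcirc_of V) \<longleftrightarrow>
    \<not> (\<exists>W. lt_model W V \<and> sat_set W 0 False \<Gamma>)"
proof -
  have "tht_entails (Sigma_T \<Gamma> (Pcirc_of V)) (Pcirc_of V) \<longleftrightarrow>
      (\<forall>W h. le_model W V \<and> sat_set W 0 h \<Gamma> \<longrightarrow> sat_set W 0 h (Pcirc_of V))"
    by (simp only: tht_entails_iff_initial imp_conjL[symmetric] models_Sigma_T_Pcirc_of[OF assms])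
  also have "\<dots> \<longleftrightarrow> (\<forall>W h. le_model W V \<longrightarrow> sat_set W 0 h \<Gamma> \<longrightarrow> h \<or> W = V)"
    using sat_set_Pcirc_of_below[OF assms] by auto
  also have "\<dots> \<longleftrightarrow> \<not> (\<exists>W. lt_model W V \<and> sat_set W 0 False \<Gamma>)"
    by (auto simp: lt_model_def all_bool_eq)
  finally show ?thesis .
qed

lemma temporal_equilibrium_model_total_iff:
  assumes "tht_model V" and "total V"
  shows "temporal_equilibrium_model \<Gamma> V \<longleftrightarrow>
    sat_set V 0 False \<Gamma> \<and> \<not> (\<exists>W. lt_model W V \<and> sat_set W 0 False \<Gamma>)"
  using assms le_model_total_iff[OF assms(2)]
  by (auto simp: temporal_equilibrium_model_def lt_model_def)

theorem proposition5p3: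
  fixes \<Gamma> :: "('a::countable) tformula set"
    and V :: "'a valuation"
    and T :: "'a tformula set"
  assumes "tht_model V"
    and "total V"
    and "T = {nexts i (Atom p) | i p. p \<in> V i False}"
  shows "temporal_equilibrium_model \<Gamma> V \<longleftrightarrow> tht_temporal_safe_belief_set \<Gamma> T"
proof -
  have "T = Pcirc_of V"
    using assms(3) by (simp add: Pcirc_of_def)
  then show ?thesis
    using assms(1,2)
    by (simp add: tht_temporal_safe_belief_set_def Pcirc_of_subset_Pcirc
        temporal_equilibrium_model_total_iff tht_consistent_Sigma_T_Pcirc_of
        tht_entails_Sigma_T_Pcirc_of)
qed

end
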